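(* Let $Y$ be a compact metric space and $X:=Z\times Y$. Then every homeomorphism $\alpha\in\mathcal{O}(\zeta\times\mathrm{id})\subset\mathrm{Homeo}(X)$ has mean dimension zero.
   Context: $(Z,\zeta)$ is the point-like minimal system of Deeley–Putnam–Strung associated to a minimal diffeomorphism of an odd-dimensional sphere $S^d$, $d\ge3$: $Z$ is an infinite compact connected metric space of finite covering dimension with the $K$-theory and Čech cohomology of a point, and $\zeta$ is a minimal homeomorphism of $Z$. $\mathcal{O}(\zeta\times\mathrm{id})=\{G^{-1}\circ(\zeta\times\mathrm{id})\circ G : G\in\mathrm{Homeo}(X)\}$. Mean dimension: for a finite open cover $\mathcal{U}$, $\mathrm{ord}(\mathcal{U})=\max_x\sum_{U\in\mathcal{U}}\chi_U(x)-1$, $\mathcal{D}(\mathcal{U})=\min$ of $\mathrm{ord}(\mathcal{V})$ over finite open refinements $\mathcal{V}$ of $\mathcal{U}$, $\mathcal{D}(\mathcal{U},\alpha,n)=\mathcal{D}(\mathcal{U}\vee\alpha^{-1}\mathcal{U}\vee\cdots\vee\alpha^{-n+1}\mathcal{U})$, $\mathcal{D}(\mathcal{U},\alpha)=\lim_n\mathcal{D}(\mathcal{U},\alpha,n)/n$, and $\mathrm{mdim}(\alpha)=\sup_{\mathcal{U}}\mathcal{D}(\mathcal{U},\alpha)$. *)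

theory Defs
  imports "HOL-Analysis.Analysis"
begin

definition finite_open_cover :: "'a::topological_space set set \<Rightarrow> bool" where
  "finite_open_cover \<U> \<longleftrightarrow> finite \<U> \<and> (\<forall>U\<in>\<U>. open U) \<and> \<Union>\<U> = UNIV"

definition refines :: "'a set set \<Rightarrow> 'a set set \<Rightarrow> bool" where
  "refines \<V> \<U> \<longleftrightarrow> (\<forall>V\<in>\<V>. \<exists>U\<in>\<U>. V \<subseteq> U)"

text \<open>ord(U) = max_x sum_{U} chi_U(x) - 1 (for a cover, every point lies in at least one member).\<close>
definition cover_ord :: "'a set set \<Rightarrow> nat" where
  "cover_ord \<U> = (MAX x\<in>(UNIV::'a set). card {U\<in>\<U>. x \<in> U}) - 1"

definition cover_D :: "'a::topological_space set set \<Rightarrow> nat" where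
  "cover_D \<U> = (LEAST k. \<exists>\<V>. finite_open_cover \<V> \<and> refines \<V> \<U> \<and> cover_ord \<V> = k)"

definition cover_join :: "'a set set \<Rightarrow> 'a set set \<Rightarrow> 'a set set" where
  "cover_join \<U> \<V> = {U \<inter> V | U V. U \<in> \<U> \<and> V \<in> \<V>}"

definition cover_preimage :: "('a \<Rightarrow> 'a) \<Rightarrow> 'a set set \<Rightarrow> 'a set set" where
  "cover_preimage f \<U> = (\<lambda>U. f -` U) ` \<U>"

fun iter_join :: "('a \<Rightarrow> 'a) \<Rightarrow> 'a set set \<Rightarrow> nat \<Rightarrow> 'a set set" where
  "iter_join f \<U> 0 = {UNIV}"
| "iter_join f \<U> (Suc n) = cover_join (iter_join f \<U> n) (cover_preimage (f ^^ n) \<U>)"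

definition cover_D_dyn :: "'a::topological_space set set \<Rightarrow> ('a \<Rightarrow> 'a) \<Rightarrow> nat \<Rightarrow> nat" where
  "cover_D_dyn \<U> f n = cover_D (iter_join f \<U> n)"

definition cover_mdim :: "'a::topological_space set set \<Rightarrow> ('a \<Rightarrow> 'a) \<Rightarrow> real" where
  "cover_mdim \<U> f = lim (\<lambda>n. real (cover_D_dyn \<U> f n) / real n)"

definition mdim :: "('a::topological_space \<Rightarrow> 'a) \<Rightarrow> ereal" where
  "mdim f = (SUP \<U>\<in>{\<U>. finite_open_cover \<U>}. ereal (cover_mdim \<U> f))"

definition finite_covering_dim :: "'a::topological_space itself \<Rightarrow> bool" where
  "finite_covering_dim _ \<longleftrightarrow>
     (\<exists>n. \<forall>\<U>::'a set set. finite_open_cover \<U> \<longrightarrow> cover_D \<U> \<le> n)"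

definition minimal_homeo :: "('a::topological_space \<Rightarrow> 'a) \<Rightarrow> bool" where
  "minimal_homeo f \<longleftrightarrow> (\<exists>g. homeomorphism UNIV UNIV f g) \<and>
     (\<forall>A. closed A \<and> f ` A = A \<longrightarrow> A = {} \<or> A = UNIV)"

end

theory Submission
  imports Defs
begin

text \<open>
  Mean dimension is invariant under conjugation by a homeomorphism, so it suffices to treat
  \<open>\<zeta> \<times> id\<close> itself. By a Lebesgue number argument every finite open cover of \<open>Z \<times> Y\<close> is
  refined by a product cover \<open>\<A> \<times> \<B>\<close>. Since \<open>\<zeta> \<times> id\<close> does not move the second coordinate,
  the \<open>n\<close>-fold dynamical join of \<open>\<A> \<times> \<B>\<close> is refined by (\<open>n\<close>-fold \<open>\<zeta>\<close>-join of \<open>\<A>\<close>) \<open>\<times> \<B>\<close>,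
  whose dimension is at most \<open>(N + 1) |\<B>|\<close> when \<open>N\<close> bounds the covering dimension of \<open>Z\<close>.
  Hence \<open>\<D>(\<U>, \<alpha>, n)\<close> is bounded in \<open>n\<close> and \<open>\<D>(\<U>, \<alpha>, n) / n \<longrightarrow> 0\<close>.
\<close>

section \<open>Iterated joins and refinements\<close>

lemma continuous_on_funpow:
  assumes "continuous_on UNIV (f :: 'a::topological_space \<Rightarrow> 'a)"
  shows "continuous_on UNIV (f ^^ n)"
proof (induction n)
  case (Suc n)
  then show ?case
    using continuous_on_compose[of UNIV "f ^^ n" f] assms continuous_on_subset
    by (metis comp_def funpow.simps(2) subset_UNIV)
qed simp

lemma finite_open_cover_preimage:
  assumes "continuous_on UNIV f" and "finite_open_cover \<U>"
  shows "finite_open_cover (cover_preimage f \<U>)"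
proof -
  have "\<Union>(cover_preimage f \<U>) = f -` \<Union>\<U>"
    by (auto simp: cover_preimage_def)
  then show ?thesis
    using assms by (auto simp: finite_open_cover_def cover_preimage_def intro: open_vimage)
qed

lemma finite_open_cover_join:
  assumes "finite_open_cover \<U>" and "finite_open_cover \<V>"
  shows "finite_open_cover (cover_join \<U> \<V>)"
proof -
  have "cover_join \<U> \<V> = (\<lambda>(U, V). U \<inter> V) ` (\<U> \<times> \<V>)"
    by (auto simp: cover_join_def)
  moreover have "x \<in> \<Union>(cover_join \<U> \<V>)" for x
  proof -
    have "x \<in> \<Union>\<U>" "x \<in> \<Union>\<V>"
      using assms by (simp_all add: finite_open_cover_def)
    then obtain U V where "U \<in> \<U>" "V \<in> \<V>" "x \<in> U" "x \<in> V"
      by blast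
    then show ?thesis by (auto simp: cover_join_def)
  qed
  ultimately show ?thesis
    using assms by (auto simp: finite_open_cover_def)
qed

lemma finite_open_cover_iter_join:
  assumes "continuous_on UNIV f" and "finite_open_cover \<U>"
  shows "finite_open_cover (iter_join f \<U> n)"
proof (induction n)
  case 0
  then show ?case by (simp add: finite_open_cover_def)
next
  case (Suc n)
  then show ?case
    by (simp add: assms finite_open_cover_join finite_open_cover_preimage continuous_on_funpow)
qed

lemma refines_trans: "refines \<W> \<V> \<Longrightarrow> refines \<V> \<U> \<Longrightarrow> refines \<W> \<U>"
  unfolding refines_def by (meson order_trans)

lemma refines_UNIV: "refines \<V> {UNIV}"
  by (simp add: refines_def)

lemma refines_preimage: "refines \<V> \<U> \<Longrightarrow> refines (cover_preimage f \<V>) (cover_preimage f \<U>)"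
  unfolding refines_def cover_preimage_def by auto (meson vimage_mono)

lemma refines_join:
  assumes "refines \<V> \<U>" and "refines \<V>' \<U>'"
  shows "refines (cover_join \<V> \<V>') (cover_join \<U> \<U>')"
  unfolding refines_def
proof
  fix W assume "W \<in> cover_join \<V> \<V>'"
  then obtain V V' where V: "V \<in> \<V>" "V' \<in> \<V>'" and W: "W = V \<inter> V'"
    by (auto simp: cover_join_def)
  obtain U U' where "U \<in> \<U>" "U' \<in> \<U>'" "V \<subseteq> U" "V' \<subseteq> U'"
    using assms V by (meson refines_def)
  then show "\<exists>U\<in>cover_join \<U> \<U>'. W \<subseteq> U"
    unfolding W cover_join_def by (intro bexI[of _ "U \<inter> U'"]) auto
qed

lemma refines_iter_join: "refines \<V> \<U> \<Longrightarrow> refines (iter_join f \<V> n) (iter_join f \<U> n)"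
  by (induction n) (simp_all add: refines_UNIV refines_join refines_preimage)

lemma cover_preimage_comp: "cover_preimage g (cover_preimage f \<U>) = cover_preimage (f \<circ> g) \<U>"
  by (simp add: cover_preimage_def image_image vimage_comp)

lemma cover_preimage_inverse:
  assumes "\<And>x. G (Ginv x) = x"
  shows "cover_preimage Ginv (cover_preimage G \<U>) = \<U>"
proof -
  have "G \<circ> Ginv = id"
    using assms by auto
  then show ?thesis
    unfolding cover_preimage_comp by (simp add: cover_preimage_def)
qed

lemma cover_join_preimage:
  "cover_join (cover_preimage f \<U>) (cover_preimage f \<V>) = cover_preimage f (cover_join \<U> \<V>)"
proof (intro set_eqI iffI)
  fix W assume "W \<in> cover_join (cover_preimage f \<U>) (cover_preimage f \<V>)"
  then obtain U V where "U \<in> \<U>" "V \<in> \<V>" "W = f -` (U \<inter> V)"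
    by (auto simp: cover_join_def cover_preimage_def)
  then show "W \<in> cover_preimage f (cover_join \<U> \<V>)"
    unfolding cover_join_def cover_preimage_def by blast
next
  fix W assume "W \<in> cover_preimage f (cover_join \<U> \<V>)"
  then obtain U V where "U \<in> \<U>" "V \<in> \<V>" "W = f -` U \<inter> f -` V"
    by (auto simp: cover_join_def cover_preimage_def)
  then show "W \<in> cover_join (cover_preimage f \<U>) (cover_preimage f \<V>)"
    unfolding cover_join_def cover_preimage_def by blast
qed

section \<open>Order and dimension of covers\<close>

lemma card_covering_le_cover_ord:
  assumes "finite \<V>"
  shows "card {V\<in>\<V>. x \<in> V} \<le> cover_ord \<V> + 1"
proof -
  have "range (\<lambda>x. card {V\<in>\<V>. x \<in> V}) \<subseteq> {..card \<V>}"
    using assms by (auto intro: card_mono)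
  then have "finite (range (\<lambda>x. card {V\<in>\<V>. x \<in> V}))"
    using finite_subset by blast
  then have "card {V\<in>\<V>. x \<in> V} \<le> (MAX x. card {V\<in>\<V>. x \<in> V})"
    by simp
  then show ?thesis
    unfolding cover_ord_def by linarith
qed

lemma cover_ord_le:
  assumes "finite \<V>" and "\<And>x. card {V\<in>\<V>. x \<in> V} \<le> K"
  shows "cover_ord \<V> \<le> K"
proof -
  have "range (\<lambda>x. card {V\<in>\<V>. x \<in> V}) \<subseteq> {..card \<V>}"
    using assms by (auto intro: card_mono)
  then have "finite (range (\<lambda>x. card {V\<in>\<V>. x \<in> V}))"
    using finite_subset by blast
  then have "(MAX x. card {V\<in>\<V>. x \<in> V}) \<le> K"
    using assms(2) by simp
  then show ?thesis
    unfolding cover_ord_def by linarith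
qed

lemma cover_ord_preimage:
  assumes "surj f"
  shows "cover_ord (cover_preimage f \<V>) = cover_ord \<V>"
proof -
  have inj: "inj (\<lambda>V. f -` V)"
    using assms by (metis injI surj_image_vimage_eq)
  have "card {W\<in>cover_preimage f \<V>. x \<in> W} = card {V\<in>\<V>. f x \<in> V}" for x
  proof -
    have "{W\<in>cover_preimage f \<V>. x \<in> W} = (\<lambda>V. f -` V) ` {V\<in>\<V>. f x \<in> V}"
      by (auto simp: cover_preimage_def)
    then show ?thesis
      using inj by (simp add: card_image inj_on_subset)
  qed
  moreover have "range (\<lambda>x. card {V\<in>\<V>. f x \<in> V}) = (\<lambda>y. card {V\<in>\<V>. y \<in> V}) ` range f"
    by (simp add: image_image)
  ultimately show ?thesis
    using assms by (simp add: cover_ord_def)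
qed

lemma cover_D_witness:
  assumes "finite_open_cover \<U>"
  obtains \<V> where "finite_open_cover \<V>" "refines \<V> \<U>" "cover_ord \<V> = cover_D \<U>"
proof -
  have "\<exists>k \<V>. finite_open_cover \<V> \<and> refines \<V> \<U> \<and> cover_ord \<V> = k"
    using assms by (auto simp: refines_def)
  from LeastI_ex[OF this] show ?thesis
    using that unfolding cover_D_def by blast
qed

lemma cover_D_le_cover_ord:
  assumes "finite_open_cover \<V>" and "refines \<V> \<U>"
  shows "cover_D \<U> \<le> cover_ord \<V>"
  unfolding cover_D_def by (rule Least_le) (use assms in blast)

lemma cover_D_mono:
  assumes "finite_open_cover \<V>" and "refines \<V> \<U>"
  shows "cover_D \<U> \<le> cover_D \<V>"
proof -
  obtain \<W> where "finite_open_cover \<W>" "refines \<W> \<V>" "cover_ord \<W> = cover_D \<V>"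
    using cover_D_witness[OF assms(1)] .
  then show ?thesis
    using cover_D_le_cover_ord[of \<W> \<U>] refines_trans[of \<W> \<V> \<U>] assms(2) by simp
qed

lemma cover_mdim_eq_0_if_bounded:
  assumes "\<And>n. cover_D_dyn \<U> f n \<le> K"
  shows "cover_mdim \<U> f = 0"
proof -
  have "(\<lambda>n. real (cover_D_dyn \<U> f n) / real n) \<longlonglongrightarrow> 0"
  proof (rule tendsto_sandwich[of "\<lambda>n. 0" _ _ "\<lambda>n. real K / real n"])
    show "\<forall>\<^sub>F n in sequentially. real (cover_D_dyn \<U> f n) / real n \<le> real K / real n"
      using assms by (intro always_eventually allI divide_right_mono) auto
  qed (auto intro: lim_const_over_n)
  then show ?thesis
    unfolding cover_mdim_def by (rule limI)
qed

lemma mdim_eq_0I: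
  assumes "\<And>\<U>. finite_open_cover \<U> \<Longrightarrow> cover_mdim \<U> f = 0"
  shows "mdim f = 0"
proof -
  have "{UNIV} \<in> {\<U>. finite_open_cover \<U>}"
    by (simp add: finite_open_cover_def)
  then have "(\<lambda>\<U>. ereal (cover_mdim \<U> f)) ` {\<U>. finite_open_cover \<U>} = {0}"
    using assms by auto
  then show ?thesis
    by (simp add: mdim_def)
qed

section \<open>Invariance of mean dimension under conjugacy\<close>

lemma funpow_conjugate:
  assumes "\<And>x. Ginv (G x) = x" "\<And>x. G (Ginv x) = x"
  shows "(Ginv \<circ> T \<circ> G) ^^ n = Ginv \<circ> T ^^ n \<circ> G"
  by (induction n) (simp_all add: assms fun_eq_iff)

lemma iter_join_conjugate:
  assumes "\<And>x. Ginv (G x) = x" "\<And>x. G (Ginv x) = x"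
  shows "iter_join (Ginv \<circ> T \<circ> G) \<U> n = cover_preimage G (iter_join T (cover_preimage Ginv \<U>) n)"
proof (induction n)
  case 0
  then show ?case by (simp add: cover_preimage_def)
next
  case (Suc n)
  have "cover_preimage ((Ginv \<circ> T \<circ> G) ^^ n) \<U>
      = cover_preimage G (cover_preimage (T ^^ n) (cover_preimage Ginv \<U>))"
    by (simp add: funpow_conjugate assms cover_preimage_comp o_assoc)
  then show ?case
    by (simp only: iter_join.simps Suc cover_join_preimage)
qed

lemma refines_preimage_homeomorphism:
  fixes G Ginv :: "'a::topological_space \<Rightarrow> 'a"
  assumes "homeomorphism UNIV UNIV G Ginv" and "finite_open_cover \<V>" and "refines \<V> \<U>"
  shows "finite_open_cover (cover_preimage G \<V>) \<and> refines (cover_preimage G \<V>) (cover_preimage G \<U>)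
    \<and> cover_ord (cover_preimage G \<V>) = cover_ord \<V>"
proof -
  have "continuous_on UNIV G" and "surj G"
    using assms(1) unfolding homeomorphism_def by (auto intro: surjI)
  then show ?thesis
    using assms(2,3) by (simp add: finite_open_cover_preimage refines_preimage cover_ord_preimage)
qed

lemma cover_D_preimage:
  fixes G Ginv :: "'a::topological_space \<Rightarrow> 'a"
  assumes "homeomorphism UNIV UNIV G Ginv"
  shows "cover_D (cover_preimage G \<U>) = cover_D \<U>"
proof -
  have Ginv_G: "cover_preimage Ginv (cover_preimage G \<U>) = \<U>"
    using assms by (simp add: cover_preimage_inverse homeomorphism_def)
  have "(\<exists>\<V>. finite_open_cover \<V> \<and> refines \<V> (cover_preimage G \<U>) \<and> cover_ord \<V> = k)
    \<longleftrightarrow> (\<exists>\<V>. finite_open_cover \<V> \<and> refines \<V> \<U> \<and> cover_ord \<V> = k)" for k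
    using refines_preimage_homeomorphism[OF assms]
      refines_preimage_homeomorphism[OF homeomorphism_symD[OF assms]]
    by (metis Ginv_G)
  then show ?thesis
    unfolding cover_D_def by simp
qed

lemma cover_mdim_conjugate:
  fixes G Ginv :: "'a::topological_space \<Rightarrow> 'a"
  assumes "homeomorphism UNIV UNIV G Ginv"
  shows "cover_mdim \<U> (Ginv \<circ> T \<circ> G) = cover_mdim (cover_preimage Ginv \<U>) T"
proof -
  have "\<And>x. Ginv (G x) = x" "\<And>x. G (Ginv x) = x"
    using assms by (simp_all add: homeomorphism_def)
  then show ?thesis
    by (simp add: cover_mdim_def cover_D_dyn_def iter_join_conjugate cover_D_preimage[OF assms])
qed

lemma finite_open_covers_preimage:
  fixes G Ginv :: "'a::topological_space \<Rightarrow> 'a"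
  assumes "homeomorphism UNIV UNIV G Ginv"
  shows "cover_preimage G ` {\<U>. finite_open_cover \<U>} = {\<U>. finite_open_cover \<U>}"
proof (intro subset_antisym subsetI)
  fix \<U> assume "\<U> \<in> cover_preimage G ` {\<U>. finite_open_cover \<U>}"
  then show "\<U> \<in> {\<U>. finite_open_cover \<U>}"
    using assms by (auto simp: homeomorphism_def finite_open_cover_preimage)
next
  fix \<U> :: "'a set set" assume "\<U> \<in> {\<U>. finite_open_cover \<U>}"
  then have "cover_preimage Ginv \<U> \<in> {\<U>. finite_open_cover \<U>}"
    using assms by (auto simp: homeomorphism_def finite_open_cover_preimage)
  moreover have "\<U> = cover_preimage G (cover_preimage Ginv \<U>)"
    using assms by (simp add: cover_preimage_inverse homeomorphism_def)
  ultimately show "\<U> \<in> cover_preimage G ` {\<U>. finite_open_cover \<U>}"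
    by blast
qed

lemma mdim_conjugate:
  fixes G Ginv :: "'a::topological_space \<Rightarrow> 'a"
  assumes "homeomorphism UNIV UNIV G Ginv"
  shows "mdim (Ginv \<circ> T \<circ> G) = mdim T"
proof -
  have "mdim (Ginv \<circ> T \<circ> G)
      = (SUP \<U>\<in>{\<U>. finite_open_cover \<U>}. ereal (cover_mdim (cover_preimage Ginv \<U>) T))"
    by (simp add: mdim_def cover_mdim_conjugate[OF assms])
  also have "\<dots> = (SUP \<U>\<in>cover_preimage Ginv ` {\<U>. finite_open_cover \<U>}. ereal (cover_mdim \<U> T))"
    by (simp add: image_image)
  also have "\<dots> = mdim T"
    by (simp add: mdim_def finite_open_covers_preimage[OF homeomorphism_symD[OF assms]])
  finally show ?thesis .
qed

section \<open>Products with the identity\<close>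

lemma funpow_prod_id:
  fixes \<zeta> :: "'a \<Rightarrow> 'a"
  shows "(\<lambda>(z, y). (\<zeta> z, y)) ^^ n = (\<lambda>(z, y). ((\<zeta> ^^ n) z, y))"
  by (induction n) (auto simp: fun_eq_iff)

definition cover_times :: "'a set set \<Rightarrow> 'b set set \<Rightarrow> ('a \<times> 'b) set set" where
  "cover_times \<A> \<B> = {A \<times> B | A B. A \<in> \<A> \<and> B \<in> \<B>}"

lemma cover_times_eq_image: "cover_times \<A> \<B> = (\<lambda>(A, B). A \<times> B) ` (\<A> \<times> \<B>)"
  by (auto simp: cover_times_def)

lemma finite_open_cover_times:
  assumes "finite_open_cover \<A>" and "finite_open_cover \<B>"
  shows "finite_open_cover (cover_times \<A> \<B>)"
proof -
  have "p \<in> \<Union>(cover_times \<A> \<B>)" for p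
  proof -
    have "fst p \<in> \<Union>\<A>" "snd p \<in> \<Union>\<B>"
      using assms by (simp_all add: finite_open_cover_def)
    then obtain A B where "A \<in> \<A>" "B \<in> \<B>" "p \<in> A \<times> B"
      by (auto simp: mem_Times_iff)
    then show ?thesis
      by (auto simp: cover_times_def)
  qed
  then show ?thesis
    using assms by (auto simp: finite_open_cover_def cover_times_eq_image intro: open_Times)
qed

lemma refines_times:
  assumes "refines \<V> \<U>"
  shows "refines (cover_times \<V> \<B>) (cover_times \<U> \<B>)"
  unfolding refines_def
proof
  fix W assume "W \<in> cover_times \<V> \<B>"
  then obtain V B where "V \<in> \<V>" "B \<in> \<B>" "W = V \<times> B"
    by (auto simp: cover_times_def)
  moreover obtain U where "U \<in> \<U>" "V \<subseteq> U"
    using assms \<open>V \<in> \<V>\<close> by (meson refines_def)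
  ultimately show "\<exists>U\<in>cover_times \<U> \<B>. W \<subseteq> U"
    unfolding cover_times_def by (intro bexI[of _ "U \<times> B"]) auto
qed

lemma cover_ord_times_le:
  assumes "finite \<V>" and "finite \<B>"
  shows "cover_ord (cover_times \<V> \<B>) \<le> (cover_ord \<V> + 1) * card \<B>"
proof (rule cover_ord_le)
  show "finite (cover_times \<V> \<B>)"
    using assms by (simp add: cover_times_eq_image)
next
  fix p :: "'a \<times> 'b"
  let ?S = "{V\<in>\<V>. fst p \<in> V}"
  have "{W\<in>cover_times \<V> \<B>. p \<in> W} \<subseteq> (\<lambda>(A, B). A \<times> B) ` (?S \<times> \<B>)"
    by (auto simp: cover_times_def mem_Times_iff)
  moreover have "finite (?S \<times> \<B>)"
    using assms by simp
  ultimately have "card {W\<in>cover_times \<V> \<B>. p \<in> W} \<le> card ((\<lambda>(A, B). A \<times> B) ` (?S \<times> \<B>))"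
    by (intro card_mono) auto
  also have "\<dots> \<le> card (?S \<times> \<B>)"
    by (rule card_image_le) fact
  also have "\<dots> = card ?S * card \<B>"
    by (rule card_cartesian_product)
  also have "\<dots> \<le> (cover_ord \<V> + 1) * card \<B>"
    using card_covering_le_cover_ord[OF assms(1)] by (rule mult_right_mono) simp
  finally show "card {W\<in>cover_times \<V> \<B>. p \<in> W} \<le> (cover_ord \<V> + 1) * card \<B>" .
qed

lemma cover_D_times_le:
  assumes "finite_open_cover \<U>" and "finite_open_cover \<B>"
  shows "cover_D (cover_times \<U> \<B>) \<le> (cover_D \<U> + 1) * card \<B>"
proof -
  obtain \<V> where \<V>: "finite_open_cover \<V>" "refines \<V> \<U>" "cover_ord \<V> = cover_D \<U>"
    using cover_D_witness[OF assms(1)] .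
  have "cover_D (cover_times \<U> \<B>) \<le> cover_ord (cover_times \<V> \<B>)"
    using \<V> assms(2) by (simp add: cover_D_le_cover_ord finite_open_cover_times refines_times)
  also have "\<dots> \<le> (cover_D \<U> + 1) * card \<B>"
    using cover_ord_times_le \<V> assms(2) by (metis finite_open_cover_def)
  finally show ?thesis .
qed

lemma refines_iter_join_prod_id:
  fixes \<zeta> :: "'a \<Rightarrow> 'a" and \<B> :: "'b set set"
  shows "refines (cover_times (iter_join \<zeta> \<A> n) \<B>)
    (iter_join (\<lambda>(z, y). (\<zeta> z, y)) (cover_times \<A> \<B>) n)"
proof (induction n)
  case 0
  then show ?case by (simp add: refines_UNIV)
next
  case (Suc n)
  show ?case
    unfolding refines_def
  proof
    fix W assume "W \<in> cover_times (iter_join \<zeta> \<A> (Suc n)) \<B>"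
    then obtain I A B where I: "I \<in> iter_join \<zeta> \<A> n" and "A \<in> \<A>" "B \<in> \<B>"
      and W: "W = (I \<inter> (\<zeta> ^^ n) -` A) \<times> B"
      by (auto simp: cover_times_def cover_join_def cover_preimage_def)
    obtain J where J: "J \<in> iter_join (\<lambda>(z, y). (\<zeta> z, y)) (cover_times \<A> \<B>) n" "I \<times> B \<subseteq> J"
      using Suc I \<open>B \<in> \<B>\<close> unfolding refines_def cover_times_def by blast
    have "((\<lambda>(z, y). (\<zeta> z, y)) ^^ n) -` (A \<times> B)
        \<in> cover_preimage ((\<lambda>(z, y). (\<zeta> z, y)) ^^ n) (cover_times \<A> \<B>)"
      using \<open>A \<in> \<A>\<close> \<open>B \<in> \<B>\<close> by (auto simp: cover_preimage_def cover_times_def)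
    moreover have "W \<subseteq> J \<inter> ((\<lambda>(z, y). (\<zeta> z, y)) ^^ n) -` (A \<times> B)"
      using J(2) by (auto simp: W funpow_prod_id)
    ultimately show "\<exists>U\<in>iter_join (\<lambda>(z, y). (\<zeta> z, y)) (cover_times \<A> \<B>) (Suc n). W \<subseteq> U"
      using J(1) by (auto simp: cover_join_def)
  qed
qed

lemma product_refinementE:
  fixes \<U> :: "('a::metric_space \<times> 'b::metric_space) set set"
  assumes "compact (UNIV :: 'a set)" and "compact (UNIV :: 'b set)" and "finite_open_cover \<U>"
  obtains \<A> \<B> where "finite_open_cover \<A>" "finite_open_cover \<B>" "refines (cover_times \<A> \<B>) \<U>"
proof -
  have "compact (UNIV :: ('a \<times> 'b) set)"
    using compact_Times[OF assms(1,2)] by simp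
  then obtain e where "e > 0" and e: "\<And>p. \<exists>U\<in>\<U>. ball p e \<subseteq> U"
    using Heine_Borel_lemma[of UNIV \<U>] assms(3) unfolding finite_open_cover_def by auto
  define r where "r = e / 2"
  have "r > 0"
    using \<open>e > 0\<close> by (simp add: r_def)
  obtain \<A> where \<A>: "\<A> \<subseteq> range (\<lambda>a::'a. ball a r)" "finite \<A>" "UNIV \<subseteq> \<Union>\<A>"
    by (rule compactE[OF assms(1), of "range (\<lambda>a. ball a r)"]) (use \<open>r > 0\<close> in auto)
  obtain \<B> where \<B>: "\<B> \<subseteq> range (\<lambda>b::'b. ball b r)" "finite \<B>" "UNIV \<subseteq> \<Union>\<B>"
    by (rule compactE[OF assms(2), of "range (\<lambda>b. ball b r)"]) (use \<open>r > 0\<close> in auto)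
  have "finite_open_cover \<A>" "finite_open_cover \<B>"
    using \<A> \<B> by (auto simp: finite_open_cover_def)
  moreover have "refines (cover_times \<A> \<B>) \<U>"
    unfolding refines_def
  proof
    fix W assume "W \<in> cover_times \<A> \<B>"
    then obtain A B where "A \<in> \<A>" "B \<in> \<B>" "W = A \<times> B"
      by (auto simp: cover_times_def)
    then obtain a b where W: "W = ball a r \<times> ball b r"
      using \<A>(1) \<B>(1) by blast
    have "W \<subseteq> ball (a, b) e"
    proof
      fix p assume "p \<in> W"
      then have "dist a (fst p) < r" "dist b (snd p) < r"
        by (auto simp: W mem_Times_iff)
      then have "dist (a, b) p < e"
        using dist_fst_le[of "(a, b)" p] dist_snd_le[of "(a, b)" p]
          dist_Pair_Pair[of a b "fst p" "snd p"]
          sqrt_sum_squares_le_sum_abs[of "dist a (fst p)" "dist b (snd p)"]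
        by (simp add: r_def)
      then show "p \<in> ball (a, b) e"
        by simp
    qed
    then show "\<exists>U\<in>\<U>. W \<subseteq> U"
      using e[of "(a, b)"] by blast
  qed
  ultimately show ?thesis
    using that by blast
qed

lemma mdim_prod_id_eq_0:
  fixes \<zeta> :: "'z::metric_space \<Rightarrow> 'z"
  assumes "compact (UNIV :: 'z set)" and "compact (UNIV :: 'y::metric_space set)"
    and "finite_covering_dim TYPE('z)" and "continuous_on UNIV \<zeta>"
  shows "mdim (\<lambda>(z, y::'y). (\<zeta> z, y)) = 0"
proof (rule mdim_eq_0I)
  fix \<U> :: "('z \<times> 'y) set set"
  assume "finite_open_cover \<U>"
  then obtain \<A> \<B> where \<A>: "finite_open_cover \<A>" and \<B>: "finite_open_cover \<B>"
    and "refines (cover_times \<A> \<B>) \<U>"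
    using product_refinementE assms(1,2) by blast
  obtain N where N: "\<And>\<V>::'z set set. finite_open_cover \<V> \<Longrightarrow> cover_D \<V> \<le> N"
    using assms(3) unfolding finite_covering_dim_def by blast
  have "cover_D_dyn \<U> (\<lambda>(z, y). (\<zeta> z, y)) n \<le> (N + 1) * card \<B>" for n
  proof -
    have \<A>n: "finite_open_cover (iter_join \<zeta> \<A> n)"
      using finite_open_cover_iter_join[OF assms(4) \<A>] .
    have "refines (cover_times (iter_join \<zeta> \<A> n) \<B>) (iter_join (\<lambda>(z, y). (\<zeta> z, y)) \<U> n)"
      using refines_iter_join_prod_id refines_iter_join[OF \<open>refines (cover_times \<A> \<B>) \<U>\<close>]
        refines_trans by blast
    then have "cover_D_dyn \<U> (\<lambda>(z, y). (\<zeta> z, y)) n \<le> cover_D (cover_times (iter_join \<zeta> \<A> n) \<B>)"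
      unfolding cover_D_dyn_def by (intro cover_D_mono finite_open_cover_times \<A>n \<B>)
    also have "\<dots> \<le> (cover_D (iter_join \<zeta> \<A> n) + 1) * card \<B>"
      using cover_D_times_le[OF \<A>n \<B>] .
    also have "\<dots> \<le> (N + 1) * card \<B>"
      using N[OF \<A>n] by simp
    finally show ?thesis .
  qed
  then show "cover_mdim \<U> (\<lambda>(z, y). (\<zeta> z, y)) = 0"
    by (rule cover_mdim_eq_0_if_bounded)
qed

theorem lemma3p2:
  fixes \<zeta> :: "'z::metric_space \<Rightarrow> 'z"
    and G Ginv :: "'z \<times> 'y::metric_space \<Rightarrow> 'z \<times> 'y"
  assumes Z_compact: "compact (UNIV :: 'z set)"
    and Z_connected: "connected (UNIV :: 'z set)"
    and Z_infinite: "infinite (UNIV :: 'z set)"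
    and Z_findim: "finite_covering_dim TYPE('z)"
    and zeta_minimal: "minimal_homeo \<zeta>"
    and Y_compact: "compact (UNIV :: 'y set)"
    and G_homeo: "homeomorphism UNIV UNIV G Ginv"
  shows "mdim (Ginv \<circ> (\<lambda>(z, y). (\<zeta> z, y)) \<circ> G) = 0"
proof -
  have "continuous_on UNIV \<zeta>"
    using zeta_minimal by (auto simp: minimal_homeo_def homeomorphism_def)
  then show ?thesis
    using mdim_conjugate[OF G_homeo] mdim_prod_id_eq_0[OF Z_compact Y_compact Z_findim] by simp
qed

end
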